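(* Assume that the super Poincaré inequality $$\mu(f^2)\le r\,\mathcal E(f)+\beta(r)\,\mu(|f|)^2,\qquad r>0,\ f\in\mathcal D(\mathcal E),$$ holds for some decreasing function $\beta:(0,\infty)\to(0,\infty)$. Then for any integers $n\ge1$, $k\ge1$ and any $f\in\mathcal A$, $$\mu_V(f^21_{\{\rho\ge n\}})\le 12\,\varepsilon_{n,k}(V)\,\mathcal E_V(f)+128\lambda\,\varepsilon_{n,k}(V)\,\mu_V(f^2)+96\,\zeta_n(V)\,\gamma_{n,k}\,\|f\|_\infty^2.$$
   Context: Setting: $(E,d)$ is a Polish space with Borel $\sigma$-field and a probability measure $\mu$. Let $q:E\times E\to[0,\infty)$ be measurable with $q(x,x)=0$ for all $x$, and $\lambda:=\sup_{x\in E}\int_E(1\wedge d(x,y)^2)q(x,y)\,\mu(\mathrm dy)<\infty.$ For bounded measurable $f,g$ set $\Gamma(f,g)(x)=\int_E(f(x)-f(y))(g(x)-g(y))q(x,y)\mu(\mathrm dy)$, $\Gamma(f)=\Gamma(f,f)$; $\mathcal A$ is the set of bounded measurable $f$ with $\Gamma(f)$ bounded, assumed dense in $L^2(\mu)$. $(\mathcal E,\mathcal D(\mathcal E))$ is the closure in $L^2(\mu)$ of $\mathcal E(f,g)=\mu(\Gamma(f,g))$ on $\mathcal A$, $\mathcal E(f)=\mathcal E(f,f)$. Fix $o\in E$, $\rho(x)=d(o,x)$. $V$ is measurable, bounded on each $\{\rho\le r\}$, with $\mu(e^V)=1$; $\mu_V=e^V\mu$; $\mathcal E_V(f)=\mu_V(\Gamma(f))$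 for $f\in\mathcal A$. $\|f\|_\infty$ is the uniform norm. Notation: $\beta^{-1}(s)=\inf\{r>0:\beta(r)\le s\}$; $K_{n,k}(V)=\sup_{\rho\le n+2}V-\inf_{\rho\le n+k+2}V$; $\varepsilon_{n,k}(V)=\sup_{m\ge n}\{\beta^{-1}(1/[2\mu(\rho>m-1)])e^{K_{m,k}(V)}\}$; $Z_n(V)=\sup_{\rho\le n+1}V$; $\zeta_n(V)=\sup_{m\ge n}\{\beta^{-1}(1/[2\mu(\rho>m-1)])e^{Z_{m+1}(V)}\}$ (suprema over integers $m\ge n$); $\gamma_{n,k}=\iint_{\{d(x,y)>k,\ \rho(y)\ge n-1\}}q(x,y)\mu(\mathrm dy)\mu(\mathrm dx)$. *)

theory Defs
  imports "HOL-Analysis.Analysis" "HOL-Probability.Probability"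
begin

definition Gam :: "'a measure \<Rightarrow> ('a \<Rightarrow> 'a \<Rightarrow> real) \<Rightarrow> ('a \<Rightarrow> real) \<Rightarrow> 'a \<Rightarrow> ennreal" where
  "Gam \<mu> q f x = (\<integral>\<^sup>+ y. ennreal ((f x - f y)\<^sup>2 * q x y) \<partial>\<mu>)"

definition classA :: "'a measure \<Rightarrow> ('a \<Rightarrow> 'a \<Rightarrow> real) \<Rightarrow> ('a \<Rightarrow> real) set" where
  "classA \<mu> q = {f. f \<in> borel_measurable \<mu> \<and> bounded (range f) \<and>
                    (\<exists>C::real. \<forall>x. Gam \<mu> q f x \<le> ennreal C)}"

definition formE :: "'a measure \<Rightarrow> ('a \<Rightarrow> 'a \<Rightarrow> real) \<Rightarrow> ('a \<Rightarrow> real) \<Rightarrow> ennreal" where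
  "formE \<mu> q f = (\<integral>\<^sup>+ x. Gam \<mu> q f x \<partial>\<mu>)"

definition lam :: "'a::metric_space measure \<Rightarrow> ('a \<Rightarrow> 'a \<Rightarrow> real) \<Rightarrow> ennreal" where
  "lam \<mu> q = (SUP x. \<integral>\<^sup>+ y. ennreal (min 1 ((dist x y)\<^sup>2) * q x y) \<partial>\<mu>)"

text \<open>Super Poincare inequality on the closure (D(E),E) of (E,A) in L^2(mu):
  f in D(E) with E(f)=L means there are g_n in A with g_n -> f in L^2(mu),
  E(g_n - g_m) -> 0, and E(g_n) -> L.\<close>
definition super_poincare :: "'a measure \<Rightarrow> ('a \<Rightarrow> 'a \<Rightarrow> real) \<Rightarrow> (real \<Rightarrow> real) \<Rightarrow> bool" where
  "super_poincare \<mu> q \<beta> \<longleftrightarrow>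
     (\<forall>r>0. \<forall>f g L. f \<in> borel_measurable \<mu> \<longrightarrow> (\<forall>n. g n \<in> classA \<mu> q) \<longrightarrow>
        ((\<lambda>n. \<integral>\<^sup>+ x. ennreal ((g n x - f x)\<^sup>2) \<partial>\<mu>) \<longlonglongrightarrow> 0) \<longrightarrow>
        (\<forall>e>0. \<exists>N. \<forall>m\<ge>N. \<forall>n\<ge>N. formE \<mu> q (\<lambda>x. g m x - g n x) < e) \<longrightarrow>
        ((\<lambda>n. formE \<mu> q (g n)) \<longlonglongrightarrow> L) \<longrightarrow>
        (\<integral>\<^sup>+ x. ennreal ((f x)\<^sup>2) \<partial>\<mu>)
           \<le> ennreal r * L + ennreal (\<beta> r) * (\<integral>\<^sup>+ x. ennreal \<bar>f x\<bar> \<partial>\<mu>)\<^sup>2)"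

text \<open>beta^{-1}(s) = inf {r>0. beta(r) <= s}, with inf of the empty set = infinity.\<close>
definition binv :: "(real \<Rightarrow> real) \<Rightarrow> ennreal \<Rightarrow> ennreal" where
  "binv \<beta> s = Inf (ennreal ` {r. 0 < r \<and> ennreal (\<beta> r) \<le> s})"

definition rho :: "'a::metric_space \<Rightarrow> 'a \<Rightarrow> real" where
  "rho x0 x = dist x0 x"

text \<open>1/[2 mu(rho > m-1)], with 1/0 = infinity.\<close>
definition tail_arg :: "'a::metric_space measure \<Rightarrow> 'a \<Rightarrow> nat \<Rightarrow> ennreal" where
  "tail_arg \<mu> x0 m = inverse (2 * ennreal (measure \<mu> {x. rho x0 x > real m - 1}))"

definition Kconst :: "'a::metric_space \<Rightarrow> ('a \<Rightarrow> real) \<Rightarrow> nat \<Rightarrow> nat \<Rightarrow> real" where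
  "Kconst x0 V n k = Sup (V ` {x. rho x0 x \<le> real n + 2})
                     - Inf (V ` {x. rho x0 x \<le> real n + real k + 2})"

definition Zconst :: "'a::metric_space \<Rightarrow> ('a \<Rightarrow> real) \<Rightarrow> nat \<Rightarrow> real" where
  "Zconst x0 V n = Sup (V ` {x. rho x0 x \<le> real n + 1})"

definition eps_const :: "'a::metric_space measure \<Rightarrow> 'a \<Rightarrow> (real \<Rightarrow> real) \<Rightarrow> ('a \<Rightarrow> real)
    \<Rightarrow> nat \<Rightarrow> nat \<Rightarrow> ennreal" where
  "eps_const \<mu> x0 \<beta> V n k =
     (SUP m\<in>{n..}. binv \<beta> (tail_arg \<mu> x0 m) * ennreal (exp (Kconst x0 V m k)))"

definition zeta_const :: "'a::metric_space measure \<Rightarrow> 'a \<Rightarrow> (real \<Rightarrow> real) \<Rightarrow> ('a \<Rightarrow> real)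
    \<Rightarrow> nat \<Rightarrow> ennreal" where
  "zeta_const \<mu> x0 \<beta> V n =
     (SUP m\<in>{n..}. binv \<beta> (tail_arg \<mu> x0 m) * ennreal (exp (Zconst x0 V (m + 1))))"

definition gamma_const :: "'a::metric_space measure \<Rightarrow> 'a \<Rightarrow> ('a \<Rightarrow> 'a \<Rightarrow> real)
    \<Rightarrow> nat \<Rightarrow> nat \<Rightarrow> ennreal" where
  "gamma_const \<mu> x0 q n k =
     (\<integral>\<^sup>+ x. (\<integral>\<^sup>+ y. indicator {y. dist x y > real k \<and> rho x0 y \<ge> real n - 1} y
                        * ennreal (q x y) \<partial>\<mu>) \<partial>\<mu>)"

definition sup_norm :: "('a \<Rightarrow> real) \<Rightarrow> real" where
  "sup_norm f = Sup (range (\<lambda>x. \<bar>f x\<bar>))"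

definition muV :: "'a measure \<Rightarrow> ('a \<Rightarrow> real) \<Rightarrow> 'a measure" where
  "muV \<mu> V = density \<mu> (\<lambda>x. ennreal (exp (V x)))"

end

theory Submission
  imports Defs
begin

text \<open>
  Cover \<open>{\<rho> \<ge> n}\<close> by the shells \<open>\<psi>\<^sub>m = cutoff(\<rho> - m)\<close>, \<open>m \<ge> n\<close>: each equals 1 on
  \<open>{m \<le> \<rho> \<le> m + 1}\<close>, vanishes outside \<open>{m - 1 < \<rho> < m + 2}\<close> and is 1-Lipschitz, so every
  point meets at most three of them. As \<open>f \<psi>\<^sub>m\<close> lives on \<open>{\<rho> > m - 1}\<close>, taking \<open>r\<close> close to
  \<open>\<beta>\<^sup>-\<^sup>1(1 / (2 \<mu>(\<rho> > m - 1)))\<close> in the super Poincar\'e inequality lets Cauchy-Schwarz absorb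
  the \<open>L\<^sup>1\<close> term, and \<open>exp V \<le> exp Z(m + 1)\<close> on the support. The energies of the \<open>f \<psi>\<^sub>m\<close> are
  then summed pointwise in \<open>(x, y)\<close>. If \<open>d(x, y) \<le> k\<close>, both points lie in the ball on which
  \<open>exp Z(m + 1) \<le> exp K(m, k) \<cdot> exp V(x)\<close>, and the product rule for \<open>f \<psi>\<^sub>m\<close> gives the \<open>\<Gamma>\<close>
  and \<open>\<lambda>\<close> terms; if \<open>d(x, y) > k\<close>, the contribution of \<open>y\<close> is at most \<open>\<parallel>f\<parallel>\<^sup>2 q(x, y)\<close> on
  \<open>{\<rho>(y) \<ge> n - 1}\<close>, which gives the \<open>\<gamma>\<close> term.
\<close>

section \<open>Trapezoidal cutoffs\<close>

definition cutoff_profile :: "real \<Rightarrow> real" where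
  "cutoff_profile t = max 0 (min 1 (min (t + 1) (2 - t)))"

lemma cutoff_profile_nonneg: "0 \<le> cutoff_profile t"
  by (simp add: cutoff_profile_def)

lemma cutoff_profile_le_1: "cutoff_profile t \<le> 1"
  by (simp add: cutoff_profile_def)

lemma cutoff_profile_eq_1: "0 \<le> t \<Longrightarrow> t \<le> 1 \<Longrightarrow> cutoff_profile t = 1"
  by (simp add: cutoff_profile_def)

lemma cutoff_profile_nonzero: "cutoff_profile t \<noteq> 0 \<Longrightarrow> -1 < t \<and> t < 2"
  by (auto simp: cutoff_profile_def)

lemma cutoff_profile_diff_sq_le: "(cutoff_profile s - cutoff_profile t)\<^sup>2 \<le> min 1 ((s - t)\<^sup>2)"
proof -
  have "\<bar>cutoff_profile s - cutoff_profile t\<bar> \<le> \<bar>1\<bar>"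
    and "\<bar>cutoff_profile s - cutoff_profile t\<bar> \<le> \<bar>s - t\<bar>"
    unfolding cutoff_profile_def by (auto simp: max_def min_def abs_if)
  then show ?thesis
    unfolding abs_le_square_iff by simp
qed

text \<open>For fixed \<open>a\<close>, only the shifts \<open>m\<close> with \<open>\<lfloor>a\<rfloor> - 1 \<le> m \<le> \<lfloor>a\<rfloor> + 1\<close> survive.\<close>
lemma cutoff_profile_support:
  "finite {m::nat. cutoff_profile (a - real m) \<noteq> 0} \<and> card {m::nat. cutoff_profile (a - real m) \<noteq> 0} \<le> 3"
proof -
  let ?S = "(\<lambda>i::int. nat (\<lfloor>a\<rfloor> - 1 + i)) ` {0, 1, 2}"
  have sub: "{m::nat. cutoff_profile (a - real m) \<noteq> 0} \<subseteq> ?S"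
  proof
    fix m assume "m \<in> {m::nat. cutoff_profile (a - real m) \<noteq> 0}"
    then have "-1 < a - real m" "a - real m < 2"
      using cutoff_profile_nonzero by auto
    moreover have "\<lfloor>a\<rfloor> \<le> a" "a < \<lfloor>a\<rfloor> + 1"
      by linarith+
    ultimately have "\<lfloor>a\<rfloor> - 1 \<le> int m" "int m \<le> \<lfloor>a\<rfloor> + 1"
      by linarith+
    then have "int m - (\<lfloor>a\<rfloor> - 1) \<in> {0, 1, 2}"
      by auto
    moreover have "m = nat (\<lfloor>a\<rfloor> - 1 + (int m - (\<lfloor>a\<rfloor> - 1)))"
      by simp
    ultimately show "m \<in> ?S"
      by blast
  qed
  have fin: "finite ?S"
    by simp
  have "card {m::nat. cutoff_profile (a - real m) \<noteq> 0} \<le> card ?S"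
    using card_mono[OF fin sub] .
  also have "\<dots> \<le> card {0::int, 1, 2}"
    by (rule card_image_le) simp
  finally show ?thesis
    using finite_subset[OF sub fin] by simp
qed

lemma square_add_le: "((a::real) + b)\<^sup>2 \<le> 2 * a\<^sup>2 + 2 * b\<^sup>2"
  using sum_squares_ge_zero[of "a - b" 0] by (simp add: power2_eq_square algebra_simps)

lemma suminf_ennreal_le_card_mult:
  fixes g :: "nat \<Rightarrow> real"
  assumes "\<And>m. 0 \<le> g m" "\<And>m. g m \<le> c"
    and "\<And>m. g m \<noteq> 0 \<Longrightarrow> m \<in> S" "finite S" "card S \<le> N"
  shows "(\<Sum>m. ennreal (g m)) \<le> ennreal (real N * c)"
proof -
  have "0 \<le> c"
    using assms(1,2) order_trans by blast
  have "(\<Sum>m. ennreal (g m)) = ennreal (\<Sum>m\<in>S. g m)"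
    using assms(1,3,4) by (subst suminf_finite[of S]) auto
  also have "(\<Sum>m\<in>S. g m) \<le> real (card S) * c"
    using sum_mono[of S g "\<lambda>_. c"] assms(2) by simp
  also have "\<dots> \<le> real N * c"
    using assms(5) \<open>0 \<le> c\<close> by (simp add: mult_right_mono)
  finally show ?thesis
    by (simp add: ennreal_leI)
qed

section \<open>The super Poincar\'e inequality on sets of small measure\<close>

lemma le_Inf_ennreal_mult:
  fixes I E :: ennreal and R :: "real set"
  assumes Inf_fin: "Inf (ennreal ` R) < \<infinity>" and E_fin: "E < \<infinity>"
    and bound: "\<And>r. r \<in> R \<Longrightarrow> I \<le> ennreal r * E"
  shows "I \<le> Inf (ennreal ` R) * E"
proof (cases "E = 0")
  case True
  obtain r where "r \<in> R"
    using Inf_fin by fastforce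
  then show ?thesis
    using bound True by simp
next
  case False
  have "R \<noteq> {}"
    using Inf_fin by force
  obtain e where e: "E = ennreal e" "0 < e"
    using E_fin False by (cases E) (auto simp: ennreal_less_zero_iff)
  show ?thesis
  proof (rule ennreal_le_epsilon)
    fix d :: real assume "0 < d"
    then have "0 < d / e"
      using e by simp
    then obtain r where r: "r \<in> R" "ennreal r < Inf (ennreal ` R) + ennreal (d / e)"
      using INF_approx_ennreal[of "d / e" _ ennreal R] Inf_fin \<open>R \<noteq> {}\<close> by auto
    have "I \<le> ennreal r * E"
      using bound r(1) .
    also have "\<dots> \<le> (Inf (ennreal ` R) + ennreal (d / e)) * E"
      using r(2) by (intro mult_right_mono) auto
    also have "\<dots> = Inf (ennreal ` R) * E + ennreal d"
      using e \<open>0 < d\<close> by (simp add: distrib_right ennreal_mult[symmetric])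
    finally show "I \<le> Inf (ennreal ` R) * E + ennreal d" .
  qed
qed

lemma ennreal_le_absorb:
  fixes x a b :: ennreal
  assumes "x < \<infinity>" "x \<le> a + b" "2 * b \<le> x"
  shows "x \<le> 2 * a"
proof -
  have "x + x = 2 * x"
    by (simp add: mult_2)
  also have "\<dots> \<le> 2 * (a + b)"
    using assms(2) by (rule mult_left_mono) simp
  also have "\<dots> = 2 * a + 2 * b"
    by (simp add: distrib_left)
  also have "\<dots> \<le> 2 * a + x"
    using assms(3) by (rule add_left_mono)
  finally show ?thesis
    using assms(1) by (metis add.commute ennreal_add_left_cancel_le infinity_ennreal_def less_irrefl)
qed

lemma ennreal_mult_inverse_le_1: "(c::ennreal) * inverse c \<le> 1"
proof (cases c)
  case (real r)
  then show ?thesis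
    by (cases "r = 0") (auto simp: inverse_ennreal ennreal_mult[symmetric])
qed simp

lemma classA_bounded: "h \<in> classA \<mu> q \<Longrightarrow> \<exists>B. \<forall>x. \<bar>h x\<bar> \<le> B"
  unfolding classA_def bounded_iff by auto

lemma super_poincare_classA:
  assumes "super_poincare \<mu> q \<beta>" "h \<in> classA \<mu> q" "0 < r"
  shows "(\<integral>\<^sup>+ x. ennreal ((h x)\<^sup>2) \<partial>\<mu>)
           \<le> ennreal r * formE \<mu> q h + ennreal (\<beta> r) * (\<integral>\<^sup>+ x. ennreal \<bar>h x\<bar> \<partial>\<mu>)\<^sup>2"
proof (rule assms(1)[unfolded super_poincare_def, rule_format, of r h "\<lambda>_. h"])
  show "\<exists>N. \<forall>m\<ge>N. \<forall>n\<ge>N. formE \<mu> q (\<lambda>x. h x - h x) < e" if "0 < e" for e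
    using that by (simp add: formE_def Gam_def)
qed (use assms(2,3) in \<open>auto simp: classA_def\<close>)

text \<open>By Cauchy-Schwarz the \<open>L\<^sup>1\<close> term is at most half of \<open>\<mu>(h\<^sup>2)\<close> and can be absorbed.\<close>
lemma super_poincare_small_support:
  assumes prob: "prob_space \<mu>" and SP: "super_poincare \<mu> q \<beta>" and h: "h \<in> classA \<mu> q"
    and A: "A \<in> sets \<mu>" and supp: "\<And>x. h x \<noteq> 0 \<Longrightarrow> x \<in> A" and r: "0 < r"
    and small: "ennreal (\<beta> r) \<le> inverse (2 * ennreal (measure \<mu> A))"
  shows "(\<integral>\<^sup>+ x. ennreal ((h x)\<^sup>2) \<partial>\<mu>) \<le> 2 * (ennreal r * formE \<mu> q h)"
proof -
  interpret prob_space \<mu> by fact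
  define I where "I = (\<integral>\<^sup>+ x. ennreal ((h x)\<^sup>2) \<partial>\<mu>)"
  define J where "J = (\<integral>\<^sup>+ x. ennreal \<bar>h x\<bar> \<partial>\<mu>)"
  have [measurable]: "h \<in> borel_measurable \<mu>"
    using h by (simp add: classA_def)
  obtain B where B: "\<And>x. \<bar>h x\<bar> \<le> B"
    using classA_bounded[OF h] by blast
  have "I \<le> (\<integral>\<^sup>+ x. ennreal (B\<^sup>2) \<partial>\<mu>)"
    unfolding I_def using B by (intro nn_integral_mono ennreal_leI) (metis abs_le_square_iff abs_ge_self order_trans power2_abs)
  then have I_fin: "I < \<infinity>"
    by (simp add: emeasure_space_1 order_le_less_trans)
  have "J = (\<integral>\<^sup>+ x. ennreal \<bar>h x\<bar> * indicator A x \<partial>\<mu>)"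
    unfolding J_def by (intro nn_integral_cong) (auto simp: indicator_def dest: supp)
  also have "\<dots>\<^sup>2 \<le> (\<integral>\<^sup>+ x. (ennreal \<bar>h x\<bar>)\<^sup>2 \<partial>\<mu>) * (\<integral>\<^sup>+ x. (indicator A x)\<^sup>2 \<partial>\<mu>)"
    using A by (intro Cauchy_Schwarz_nn_integral) auto
  also have "(\<integral>\<^sup>+ x. (ennreal \<bar>h x\<bar>)\<^sup>2 \<partial>\<mu>) = I"
    unfolding I_def by (intro nn_integral_cong) (simp add: ennreal_power)
  also have "(\<integral>\<^sup>+ x. (indicator A x)\<^sup>2 \<partial>\<mu>) = (\<integral>\<^sup>+ x. indicator A x \<partial>\<mu>)"
    by (intro nn_integral_cong) (simp split: split_indicator)
  also have "\<dots> = ennreal (measure \<mu> A)"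
    using A by (simp add: emeasure_eq_measure)
  finally have CS: "J\<^sup>2 \<le> I * ennreal (measure \<mu> A)" .
  have "2 * (ennreal (\<beta> r) * J\<^sup>2) \<le> 2 * inverse (2 * ennreal (measure \<mu> A)) * (I * ennreal (measure \<mu> A))"
    using small CS by (simp add: mult.assoc mult_mono)
  also have "\<dots> = ((2 * ennreal (measure \<mu> A)) * inverse (2 * ennreal (measure \<mu> A))) * I"
    by (simp add: ac_simps)
  also have "\<dots> \<le> I"
    using ennreal_mult_inverse_le_1 mult_right_mono by fastforce
  finally have "2 * (ennreal (\<beta> r) * J\<^sup>2) \<le> I" .
  moreover have "I \<le> ennreal r * formE \<mu> q h + ennreal (\<beta> r) * J\<^sup>2"
    unfolding I_def J_def by (rule super_poincare_classA[OF SP h r])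
  ultimately show ?thesis
    unfolding I_def[symmetric] using ennreal_le_absorb I_fin by blast
qed

section \<open>Shells around the base point\<close>

lemma square_mult_diff_le_near:
  "((a::real) * s - b * t)\<^sup>2 \<le> 2 * ((a - b)\<^sup>2 * t\<^sup>2) + 2 * (a\<^sup>2 * (s - t)\<^sup>2)"
proof -
  have "(a * s - b * t)\<^sup>2 = (t * (a - b) + a * (s - t))\<^sup>2"
    by (simp add: algebra_simps)
  also have "\<dots> \<le> 2 * (t * (a - b))\<^sup>2 + 2 * (a * (s - t))\<^sup>2"
    by (rule square_add_le)
  finally show ?thesis
    by (simp add: power_mult_distrib mult.commute)
qed

lemma square_mult_diff_le_far:
  "((a::real) * s - b * t)\<^sup>2 \<le> 2 * (a\<^sup>2 * s\<^sup>2) + 2 * (b\<^sup>2 * t\<^sup>2)"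
  using square_add_le[of "a * s" "- (b * t)"] by (simp add: power_mult_distrib)

lemma rho_measurable [measurable]: "(\<lambda>x. rho x0 x) \<in> borel_measurable borel"
  unfolding rho_def by (intro borel_measurable_continuous_onI continuous_intros)

lemma rho_nonneg: "0 \<le> rho x0 x"
  by (simp add: rho_def)

lemma rho_lipschitz: "\<bar>rho x0 x - rho x0 y\<bar> \<le> dist x y"
  unfolding rho_def using dist_triangle[of x0 x y] dist_triangle[of x0 y x]
  by (simp add: dist_commute abs_le_iff)

definition shell :: "'a::metric_space \<Rightarrow> nat \<Rightarrow> 'a \<Rightarrow> real" where
  "shell x0 m x = cutoff_profile (rho x0 x - real m)"

lemma shell_measurable [measurable]: "(\<lambda>x. shell x0 m x) \<in> borel_measurable borel"
  unfolding shell_def cutoff_profile_def by measurable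

lemma shell_sq_le_1: "(shell x0 m x)\<^sup>2 \<le> 1"
  unfolding shell_def using cutoff_profile_nonneg cutoff_profile_le_1 by (simp add: power_le_one)

lemma abs_shell_le_1: "\<bar>shell x0 m x\<bar> \<le> 1"
  unfolding shell_def using cutoff_profile_nonneg cutoff_profile_le_1 by simp

lemma shell_nonzero: "shell x0 m x \<noteq> 0 \<Longrightarrow> real m - 1 < rho x0 x \<and> rho x0 x < real m + 2"
  unfolding shell_def using cutoff_profile_nonzero[of "rho x0 x - real m"] by simp

lemma shell_floor_eq_1: "shell x0 (nat \<lfloor>rho x0 x\<rfloor>) x = 1"
proof -
  have "real (nat \<lfloor>rho x0 x\<rfloor>) = of_int \<lfloor>rho x0 x\<rfloor>"
    using rho_nonneg[of x0 x] by simp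
  then show ?thesis
    unfolding shell_def by (intro cutoff_profile_eq_1) linarith+
qed

lemma shell_diff_sq_le: "(shell x0 m x - shell x0 m y)\<^sup>2 \<le> min 1 ((dist x y)\<^sup>2)"
proof -
  have "(shell x0 m x - shell x0 m y)\<^sup>2 \<le> min 1 ((rho x0 x - rho x0 y)\<^sup>2)"
    unfolding shell_def using cutoff_profile_diff_sq_le[of "rho x0 x - real m" "rho x0 y - real m"]
    by simp
  also have "(rho x0 x - rho x0 y)\<^sup>2 \<le> (dist x y)\<^sup>2"
    using rho_lipschitz[of x0 x y] by (simp add: abs_le_square_iff[symmetric])
  finally show ?thesis
    by simp
qed

lemma shell_support:
  "finite {m. shell x0 m x \<noteq> 0}" "card {m. shell x0 m x \<noteq> 0} \<le> 3"
  using cutoff_profile_support[of "rho x0 x"] by (simp_all add: shell_def)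

lemma suminf_shell_sq_le: "(\<Sum>m. ennreal ((shell x0 m x)\<^sup>2)) \<le> 3"
proof -
  have "(\<Sum>m. ennreal ((shell x0 m x)\<^sup>2)) \<le> ennreal (real 3 * 1)"
  proof (rule suminf_ennreal_le_card_mult)
    show "(shell x0 m x)\<^sup>2 \<noteq> 0 \<Longrightarrow> m \<in> {m. shell x0 m x \<noteq> 0}" for m
      by simp
  qed (use shell_support shell_sq_le_1 in auto)
  then show ?thesis
    by simp
qed

lemma suminf_shell_diff_sq_le:
  "(\<Sum>m. ennreal ((shell x0 m x - shell x0 m y)\<^sup>2)) \<le> 6 * ennreal (min 1 ((dist x y)\<^sup>2))"
proof -
  let ?S = "{m. shell x0 m x \<noteq> 0} \<union> {m. shell x0 m y \<noteq> 0}"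
  have "(\<Sum>m. ennreal ((shell x0 m x - shell x0 m y)\<^sup>2)) \<le> ennreal (real 6 * min 1 ((dist x y)\<^sup>2))"
  proof (rule suminf_ennreal_le_card_mult)
    show "(shell x0 m x - shell x0 m y)\<^sup>2 \<noteq> 0 \<Longrightarrow> m \<in> ?S" for m
      by auto
    show "finite ?S"
      using shell_support(1) by blast
    show "card ?S \<le> 6"
      using card_Un_le[of "{m. shell x0 m x \<noteq> 0}" "{m. shell x0 m y \<noteq> 0}"]
        shell_support(2)[of x0 x] shell_support(2)[of x0 y]
      by linarith
  qed (use shell_diff_sq_le in auto)
  then show ?thesis
    by (simp add: ennreal_mult)
qed

section \<open>Pointwise sums of shell energies\<close>

lemma ennreal_scaled_le_two_terms:
  fixes w :: ennreal and P A a B b :: real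
  assumes "0 \<le> A" "0 \<le> a" "0 \<le> B" "0 \<le> b" "P \<le> 2 * A * a + 2 * B * b"
  shows "2 * w * ennreal P \<le> 4 * w * ennreal A * ennreal a + 4 * w * ennreal B * ennreal b"
proof -
  have "ennreal P \<le> ennreal (2 * A * a + 2 * B * b)"
    using assms(5) by (rule ennreal_leI)
  also have "\<dots> = 2 * (ennreal A * ennreal a) + 2 * (ennreal B * ennreal b)"
    using assms(1-4) by (simp add: ennreal_plus ennreal_mult mult.assoc)
  finally have "2 * w * ennreal P \<le> 2 * w * (2 * (ennreal A * ennreal a) + 2 * (ennreal B * ennreal b))"
    by (rule mult_left_mono) simp
  also have "\<dots> = 4 * w * ennreal A * ennreal a + 4 * w * ennreal B * ennreal b"
    by (simp add: algebra_simps)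
  finally show ?thesis .
qed

lemma shell_energy_term_le_near:
  fixes w c :: ennreal and f :: "'a::metric_space \<Rightarrow> real"
  assumes Q: "0 \<le> Q" and w: "shell x0 m x \<noteq> 0 \<or> shell x0 m y \<noteq> 0 \<Longrightarrow> w \<le> c"
  shows "2 * w * ennreal ((f x * shell x0 m x - f y * shell x0 m y)\<^sup>2 * Q)
    \<le> 4 * c * ennreal ((f x - f y)\<^sup>2 * Q) * ennreal ((shell x0 m y)\<^sup>2)
      + 4 * c * ennreal ((f x)\<^sup>2 * Q) * ennreal ((shell x0 m x - shell x0 m y)\<^sup>2)"
proof (cases "shell x0 m x = 0 \<and> shell x0 m y = 0")
  case False
  have "(f x * shell x0 m x - f y * shell x0 m y)\<^sup>2 * Q
      \<le> 2 * ((f x - f y)\<^sup>2 * Q) * (shell x0 m y)\<^sup>2 + 2 * ((f x)\<^sup>2 * Q) * (shell x0 m x - shell x0 m y)\<^sup>2"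
    using mult_right_mono[OF square_mult_diff_le_near[of "f x" "shell x0 m x" "f y" "shell x0 m y"] Q]
    by (simp add: algebra_simps)
  then have "2 * w * ennreal ((f x * shell x0 m x - f y * shell x0 m y)\<^sup>2 * Q)
      \<le> 4 * w * ennreal ((f x - f y)\<^sup>2 * Q) * ennreal ((shell x0 m y)\<^sup>2)
        + 4 * w * ennreal ((f x)\<^sup>2 * Q) * ennreal ((shell x0 m x - shell x0 m y)\<^sup>2)"
    using Q by (intro ennreal_scaled_le_two_terms) auto
  also have "\<dots> \<le> 4 * c * ennreal ((f x - f y)\<^sup>2 * Q) * ennreal ((shell x0 m y)\<^sup>2)
      + 4 * c * ennreal ((f x)\<^sup>2 * Q) * ennreal ((shell x0 m x - shell x0 m y)\<^sup>2)"
    using w False by (intro add_mono mult_right_mono mult_left_mono) auto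
  finally show ?thesis .
qed simp

lemma shell_energy_term_le_far:
  fixes w c z :: ennreal and f :: "'a::metric_space \<Rightarrow> real"
  assumes Q: "0 \<le> Q" and B: "\<bar>f y\<bar> \<le> B" and "n \<le> m"
    and w_eps: "shell x0 m x \<noteq> 0 \<Longrightarrow> w \<le> c" and w_zeta: "w \<le> z"
  shows "2 * w * ennreal ((f x * shell x0 m x - f y * shell x0 m y)\<^sup>2 * Q)
    \<le> 4 * c * ennreal ((f x)\<^sup>2 * Q) * ennreal ((shell x0 m x)\<^sup>2)
      + 4 * z * ennreal (B\<^sup>2 * Q) * indicator {v. real n - 1 \<le> rho x0 v} y * ennreal ((shell x0 m y)\<^sup>2)"
proof -
  have "(f y)\<^sup>2 \<le> B\<^sup>2"
    using B by (metis abs_le_square_iff abs_ge_self order_trans)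
  then have "(f x * shell x0 m x - f y * shell x0 m y)\<^sup>2
      \<le> 2 * ((f x)\<^sup>2 * (shell x0 m x)\<^sup>2) + 2 * (B\<^sup>2 * (shell x0 m y)\<^sup>2)"
    using square_mult_diff_le_far[of "f x" "shell x0 m x" "f y" "shell x0 m y"]
      mult_right_mono[of "(f y)\<^sup>2" "B\<^sup>2" "(shell x0 m y)\<^sup>2"]
    by simp
  then have "(f x * shell x0 m x - f y * shell x0 m y)\<^sup>2 * Q
      \<le> (2 * ((f x)\<^sup>2 * (shell x0 m x)\<^sup>2) + 2 * (B\<^sup>2 * (shell x0 m y)\<^sup>2)) * Q"
    using Q by (rule mult_right_mono)
  then have "(f x * shell x0 m x - f y * shell x0 m y)\<^sup>2 * Q
      \<le> 2 * ((f x)\<^sup>2 * Q) * (shell x0 m x)\<^sup>2 + 2 * (B\<^sup>2 * Q) * (shell x0 m y)\<^sup>2"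
    by (simp add: algebra_simps)
  then have "2 * w * ennreal ((f x * shell x0 m x - f y * shell x0 m y)\<^sup>2 * Q)
      \<le> 4 * w * ennreal ((f x)\<^sup>2 * Q) * ennreal ((shell x0 m x)\<^sup>2)
        + 4 * w * ennreal (B\<^sup>2 * Q) * ennreal ((shell x0 m y)\<^sup>2)"
    using Q by (intro ennreal_scaled_le_two_terms) auto
  also have "\<dots> \<le> 4 * c * ennreal ((f x)\<^sup>2 * Q) * ennreal ((shell x0 m x)\<^sup>2)
      + 4 * z * ennreal (B\<^sup>2 * Q) * indicator {v. real n - 1 \<le> rho x0 v} y * ennreal ((shell x0 m y)\<^sup>2)"
  proof (intro add_mono)
    show "4 * w * ennreal ((f x)\<^sup>2 * Q) * ennreal ((shell x0 m x)\<^sup>2)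
        \<le> 4 * c * ennreal ((f x)\<^sup>2 * Q) * ennreal ((shell x0 m x)\<^sup>2)"
    proof (cases "shell x0 m x = 0")
      case False
      then show ?thesis
        using w_eps by (intro mult_right_mono mult_left_mono) auto
    qed simp
    show "4 * w * ennreal (B\<^sup>2 * Q) * ennreal ((shell x0 m y)\<^sup>2)
        \<le> 4 * z * ennreal (B\<^sup>2 * Q) * indicator {v. real n - 1 \<le> rho x0 v} y * ennreal ((shell x0 m y)\<^sup>2)"
    proof (cases "shell x0 m y = 0")
      case False
      then have "y \<in> {v. real n - 1 \<le> rho x0 v}"
        using \<open>n \<le> m\<close> shell_nonzero[of x0 m y] by simp
      then show ?thesis
        using w_zeta by simp (intro mult_right_mono mult_left_mono; simp)
    qed simp
  qed
  finally show ?thesis .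
qed

lemma shell_energy_sum_near:
  fixes w :: "nat \<Rightarrow> ennreal" and f :: "'a::metric_space \<Rightarrow> real"
  assumes near: "dist x y \<le> real k" and Q: "0 \<le> Q"
    and w: "\<And>m. n \<le> m \<Longrightarrow> rho x0 x \<le> real m + real k + 2 \<Longrightarrow> w m \<le> c"
  shows "(\<Sum>m. if n \<le> m then 2 * w m * ennreal ((f x * shell x0 m x - f y * shell x0 m y)\<^sup>2 * Q) else 0)
    \<le> 12 * c * ennreal ((f x - f y)\<^sup>2 * Q) + 24 * c * ennreal ((f x)\<^sup>2 * min 1 ((dist x y)\<^sup>2) * Q)"
proof -
  define U where "U = 4 * c * ennreal ((f x - f y)\<^sup>2 * Q)"
  define W where "W = 4 * c * ennreal ((f x)\<^sup>2 * Q)"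
  have termwise: "(if n \<le> m then 2 * w m * ennreal ((f x * shell x0 m x - f y * shell x0 m y)\<^sup>2 * Q) else 0)
      \<le> U * ennreal ((shell x0 m y)\<^sup>2) + W * ennreal ((shell x0 m x - shell x0 m y)\<^sup>2)" for m
  proof (cases "n \<le> m")
    case True
    have "w m \<le> c" if "shell x0 m x \<noteq> 0 \<or> shell x0 m y \<noteq> 0"
      using that True w shell_nonzero[of x0 m x] shell_nonzero[of x0 m y] rho_lipschitz[of x0 x y] near
      by (auto simp: abs_le_iff)
    then have "2 * w m * ennreal ((f x * shell x0 m x - f y * shell x0 m y)\<^sup>2 * Q)
        \<le> U * ennreal ((shell x0 m y)\<^sup>2) + W * ennreal ((shell x0 m x - shell x0 m y)\<^sup>2)"
      unfolding U_def W_def by (rule shell_energy_term_le_near[OF Q])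
    then show ?thesis
      using True by simp
  qed simp
  have "(\<Sum>m. if n \<le> m then 2 * w m * ennreal ((f x * shell x0 m x - f y * shell x0 m y)\<^sup>2 * Q) else 0)
      \<le> (\<Sum>m. U * ennreal ((shell x0 m y)\<^sup>2) + W * ennreal ((shell x0 m x - shell x0 m y)\<^sup>2))"
    by (intro suminf_le termwise) auto
  also have "\<dots> = U * (\<Sum>m. ennreal ((shell x0 m y)\<^sup>2)) + W * (\<Sum>m. ennreal ((shell x0 m x - shell x0 m y)\<^sup>2))"
    by (simp add: suminf_add[symmetric])
  also have "\<dots> \<le> U * 3 + W * (6 * ennreal (min 1 ((dist x y)\<^sup>2)))"
    by (intro add_mono mult_left_mono suminf_shell_sq_le suminf_shell_diff_sq_le) auto
  also have "\<dots> = 12 * c * ennreal ((f x - f y)\<^sup>2 * Q) + 24 * c * ennreal ((f x)\<^sup>2 * min 1 ((dist x y)\<^sup>2) * Q)"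
    unfolding U_def W_def using Q by (simp add: ennreal_mult mult_ac)
  finally show ?thesis .
qed

lemma shell_energy_sum_far:
  fixes w :: "nat \<Rightarrow> ennreal" and f :: "'a::metric_space \<Rightarrow> real"
  assumes far: "real k < dist x y" and k: "1 \<le> k" and Q: "0 \<le> Q" and B: "\<bar>f y\<bar> \<le> B"
    and w_eps: "\<And>m. n \<le> m \<Longrightarrow> rho x0 x \<le> real m + real k + 2 \<Longrightarrow> w m \<le> c"
    and w_zeta: "\<And>m. n \<le> m \<Longrightarrow> w m \<le> z"
  shows "(\<Sum>m. if n \<le> m then 2 * w m * ennreal ((f x * shell x0 m x - f y * shell x0 m y)\<^sup>2 * Q) else 0)
    \<le> 24 * c * ennreal ((f x)\<^sup>2 * min 1 ((dist x y)\<^sup>2) * Q)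
      + 12 * z * ennreal (B\<^sup>2 * Q) * indicator {v. real n - 1 \<le> rho x0 v} y"
proof -
  define U where "U = 4 * c * ennreal ((f x)\<^sup>2 * Q)"
  define Z where "Z = 4 * z * ennreal (B\<^sup>2 * Q) * indicator {v. real n - 1 \<le> rho x0 v} y"
  have termwise: "(if n \<le> m then 2 * w m * ennreal ((f x * shell x0 m x - f y * shell x0 m y)\<^sup>2 * Q) else 0)
      \<le> U * ennreal ((shell x0 m x)\<^sup>2) + Z * ennreal ((shell x0 m y)\<^sup>2)" for m
  proof (cases "n \<le> m")
    case True
    have "w m \<le> c" if "shell x0 m x \<noteq> 0"
      using that True w_eps shell_nonzero[of x0 m x] by simp
    then have "2 * w m * ennreal ((f x * shell x0 m x - f y * shell x0 m y)\<^sup>2 * Q)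
        \<le> U * ennreal ((shell x0 m x)\<^sup>2) + Z * ennreal ((shell x0 m y)\<^sup>2)"
      unfolding U_def Z_def by (rule shell_energy_term_le_far[where f = f, OF Q B True _ w_zeta[OF True]])
    then show ?thesis
      using True by simp
  qed simp
  have "(\<Sum>m. if n \<le> m then 2 * w m * ennreal ((f x * shell x0 m x - f y * shell x0 m y)\<^sup>2 * Q) else 0)
      \<le> (\<Sum>m. U * ennreal ((shell x0 m x)\<^sup>2) + Z * ennreal ((shell x0 m y)\<^sup>2))"
    by (intro suminf_le termwise) auto
  also have "\<dots> = U * (\<Sum>m. ennreal ((shell x0 m x)\<^sup>2)) + Z * (\<Sum>m. ennreal ((shell x0 m y)\<^sup>2))"
    by (simp add: suminf_add[symmetric])
  also have "\<dots> \<le> U * 3 + Z * 3"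
    by (intro add_mono mult_left_mono suminf_shell_sq_le) auto
  also have "\<dots> \<le> 24 * c * ennreal ((f x)\<^sup>2 * min 1 ((dist x y)\<^sup>2) * Q)
      + 12 * z * ennreal (B\<^sup>2 * Q) * indicator {v. real n - 1 \<le> rho x0 v} y"
  proof -
    have "1 \<le> (dist x y)\<^sup>2"
      using far k by (simp add: one_le_power)
    then have "U * 3 = 12 * c * ennreal ((f x)\<^sup>2 * min 1 ((dist x y)\<^sup>2) * Q)"
      unfolding U_def by (simp add: mult_ac)
    moreover have "\<dots> \<le> 24 * c * ennreal ((f x)\<^sup>2 * min 1 ((dist x y)\<^sup>2) * Q)"
      by (intro mult_right_mono) auto
    ultimately show ?thesis
      unfolding Z_def by (simp add: mult_ac add_right_mono)
  qed
  finally show ?thesis .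
qed

lemma shell_energy_sum_le:
  fixes w :: "nat \<Rightarrow> ennreal" and f :: "'a::metric_space \<Rightarrow> real"
  assumes k: "1 \<le> k" and Q: "0 \<le> Q" and B: "\<bar>f y\<bar> \<le> B"
    and w_eps: "\<And>m. n \<le> m \<Longrightarrow> rho x0 x \<le> real m + real k + 2 \<Longrightarrow> w m \<le> c"
    and w_zeta: "\<And>m. n \<le> m \<Longrightarrow> w m \<le> z"
  shows "(\<Sum>m. if n \<le> m then 2 * w m * ennreal ((f x * shell x0 m x - f y * shell x0 m y)\<^sup>2 * Q) else 0)
    \<le> 12 * c * ennreal ((f x - f y)\<^sup>2 * Q) + 24 * c * ennreal ((f x)\<^sup>2 * min 1 ((dist x y)\<^sup>2) * Q)
      + 12 * z * ennreal (B\<^sup>2 * Q) * indicator {v. dist x v > real k \<and> rho x0 v \<ge> real n - 1} y"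
proof (cases "dist x y \<le> real k")
  case True
  then show ?thesis
    using shell_energy_sum_near[OF True Q w_eps, where f = f] by (simp add: add_increasing2)
next
  case False
  then have far: "real k < dist x y"
    by simp
  then have "indicator {v. dist x v > real k \<and> rho x0 v \<ge> real n - 1} y
      = (indicator {v. real n - 1 \<le> rho x0 v} y :: ennreal)"
    by (simp add: indicator_def)
  then show ?thesis
    using shell_energy_sum_far[where f = f, OF far k Q B w_eps w_zeta] by (simp add: add_increasing ac_simps)
qed

section \<open>Localization to the tail\<close>

lemma formE_finite_classA:
  assumes "prob_space \<mu>" "h \<in> classA \<mu> q"
  shows "formE \<mu> q h < \<infinity>"
proof -
  interpret prob_space \<mu> by fact
  obtain C where "\<And>x. Gam \<mu> q h x \<le> ennreal C"
    using assms(2) by (auto simp: classA_def)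
  then have "formE \<mu> q h \<le> (\<integral>\<^sup>+ x. ennreal C \<partial>\<mu>)"
    unfolding formE_def by (intro nn_integral_mono)
  then show ?thesis
    by (simp add: emeasure_space_1 order_le_less_trans)
qed

lemma abs_le_sup_norm: "bounded (range f) \<Longrightarrow> \<bar>f x\<bar> \<le> sup_norm (f :: 'a \<Rightarrow> real)"
  unfolding sup_norm_def bounded_iff
  by (intro cSup_upper) (auto simp: bdd_above_def)

lemma cutoff_energy_density_le:
  fixes f \<psi> :: "'a::metric_space \<Rightarrow> real"
  assumes "\<bar>f x\<bar> \<le> B" "\<bar>\<psi> y\<bar> \<le> 1" "(\<psi> x - \<psi> y)\<^sup>2 \<le> min 1 ((dist x y)\<^sup>2)" "0 \<le> Q"
  shows "ennreal ((f x * \<psi> x - f y * \<psi> y)\<^sup>2 * Q)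
    \<le> 2 * ennreal ((f x - f y)\<^sup>2 * Q) + 2 * ennreal (B\<^sup>2) * ennreal (min 1 ((dist x y)\<^sup>2) * Q)"
proof -
  have "(\<psi> y)\<^sup>2 \<le> 1" "(f x)\<^sup>2 \<le> B\<^sup>2"
    using assms(1,2) by (simp_all add: abs_square_le_1) (metis abs_le_square_iff abs_ge_self order_trans)
  then have "2 * ((f x - f y)\<^sup>2 * (\<psi> y)\<^sup>2) + 2 * ((f x)\<^sup>2 * (\<psi> x - \<psi> y)\<^sup>2)
      \<le> 2 * (f x - f y)\<^sup>2 + 2 * (B\<^sup>2 * min 1 ((dist x y)\<^sup>2))"
    using assms(3) by (intro add_mono mult_left_mono mult_mono) (auto simp: mult_left_le)
  then have "(f x * \<psi> x - f y * \<psi> y)\<^sup>2 \<le> 2 * (f x - f y)\<^sup>2 + 2 * (B\<^sup>2 * min 1 ((dist x y)\<^sup>2))"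
    using square_mult_diff_le_near[of "f x" "\<psi> x" "f y" "\<psi> y"] by linarith
  then have "(f x * \<psi> x - f y * \<psi> y)\<^sup>2 * Q \<le> (2 * (f x - f y)\<^sup>2 + 2 * (B\<^sup>2 * min 1 ((dist x y)\<^sup>2))) * Q"
    using assms(4) by (rule mult_right_mono)
  also have "\<dots> = 2 * ((f x - f y)\<^sup>2 * Q) + 2 * B\<^sup>2 * (min 1 ((dist x y)\<^sup>2) * Q)"
    by (simp add: algebra_simps)
  finally have "ennreal ((f x * \<psi> x - f y * \<psi> y)\<^sup>2 * Q)
      \<le> ennreal (2 * ((f x - f y)\<^sup>2 * Q) + 2 * B\<^sup>2 * (min 1 ((dist x y)\<^sup>2) * Q))"
    by (rule ennreal_leI)
  also have "\<dots> = 2 * ennreal ((f x - f y)\<^sup>2 * Q) + 2 * ennreal (B\<^sup>2) * ennreal (min 1 ((dist x y)\<^sup>2) * Q)"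
    using assms(4) by (simp add: ennreal_plus ennreal_mult)
  finally show ?thesis .
qed

locale tail_setting =
  fixes \<mu> :: "'a::{metric_space, second_countable_topology} measure"
    and q :: "'a \<Rightarrow> 'a \<Rightarrow> real" and x0 :: 'a and V :: "'a \<Rightarrow> real" and \<beta> :: "real \<Rightarrow> real"
  assumes prob: "prob_space \<mu>"
    and sets_eq [measurable_cong]: "sets \<mu> = sets borel"
    and q_measurable: "(\<lambda>(x, y). q x y) \<in> borel_measurable (\<mu> \<Otimes>\<^sub>M \<mu>)"
    and q_nonneg: "\<And>x y. 0 \<le> q x y"
    and lam_finite: "lam \<mu> q < \<infinity>"
    and V_measurable: "V \<in> borel_measurable \<mu>"
    and V_bounded: "\<And>r. bounded (V ` {x. rho x0 x \<le> r})"
    and SP: "super_poincare \<mu> q \<beta>"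
begin

sublocale prob_space \<mu>
  by (rule prob)

lemma q_measurable_borel [measurable]: "(\<lambda>p. q (fst p) (snd p)) \<in> borel_measurable (borel \<Otimes>\<^sub>M borel)"
  using q_measurable by (simp add: case_prod_beta')

lemma measurable_\<mu>_eq: "measurable \<mu> N = measurable borel N"
  by (rule measurable_cong_sets[OF sets_eq refl])

lemma V_measurable_borel [measurable]: "V \<in> borel_measurable borel"
  using V_measurable by (simp add: measurable_\<mu>_eq)

lemma classA_measurable: "f \<in> classA \<mu> q \<Longrightarrow> f \<in> borel_measurable borel"
  by (simp add: classA_def measurable_\<mu>_eq)

lemma q_measurable_snd [measurable]: "q x \<in> borel_measurable borel"
  using measurable_compose_Pair1[OF _ q_measurable_borel, of x] by simp

lemma Gam_measurable:
  assumes [measurable]: "f \<in> borel_measurable borel"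
  shows "(\<lambda>x. Gam \<mu> q f x) \<in> borel_measurable borel"
  unfolding Gam_def by measurable

lemma nn_integral_lam_le: "(\<integral>\<^sup>+ y. ennreal (min 1 ((dist x y)\<^sup>2) * q x y) \<partial>\<mu>) \<le> lam \<mu> q"
  unfolding lam_def by (rule SUP_upper) simp

lemma Gam_mult_cutoff_le:
  assumes [measurable]: "f \<in> borel_measurable borel" "\<psi> \<in> borel_measurable borel"
    and f_bound: "\<And>x. \<bar>f x\<bar> \<le> B" and \<psi>_bound: "\<And>x. \<bar>\<psi> x\<bar> \<le> 1"
    and \<psi>_lip: "\<And>x y. (\<psi> x - \<psi> y)\<^sup>2 \<le> min 1 ((dist x y)\<^sup>2)"
  shows "Gam \<mu> q (\<lambda>x. f x * \<psi> x) x \<le> 2 * Gam \<mu> q f x + 2 * ennreal (B\<^sup>2) * lam \<mu> q"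
proof -
  have "Gam \<mu> q (\<lambda>x. f x * \<psi> x) x
      \<le> (\<integral>\<^sup>+ y. 2 * ennreal ((f x - f y)\<^sup>2 * q x y) + 2 * ennreal (B\<^sup>2) * ennreal (min 1 ((dist x y)\<^sup>2) * q x y) \<partial>\<mu>)"
    unfolding Gam_def using f_bound \<psi>_bound \<psi>_lip q_nonneg
    by (intro nn_integral_mono cutoff_energy_density_le)
  also have "\<dots> = 2 * Gam \<mu> q f x + 2 * ennreal (B\<^sup>2) * (\<integral>\<^sup>+ y. ennreal (min 1 ((dist x y)\<^sup>2) * q x y) \<partial>\<mu>)"
  proof -
    have m1: "(\<lambda>y. ennreal ((f x - f y)\<^sup>2 * q x y)) \<in> borel_measurable \<mu>"
      and m2: "(\<lambda>y. ennreal (min 1 ((dist x y)\<^sup>2) * q x y)) \<in> borel_measurable \<mu>"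
      by measurable
    then have "(\<lambda>y. 2 * ennreal ((f x - f y)\<^sup>2 * q x y)) \<in> borel_measurable \<mu>"
      and "(\<lambda>y. 2 * ennreal (B\<^sup>2) * ennreal (min 1 ((dist x y)\<^sup>2) * q x y)) \<in> borel_measurable \<mu>"
      by measurable
    then show ?thesis
      unfolding Gam_def by (simp add: nn_integral_add nn_integral_cmult[OF m1] nn_integral_cmult[OF m2])
  qed
  also have "\<dots> \<le> 2 * Gam \<mu> q f x + 2 * ennreal (B\<^sup>2) * lam \<mu> q"
    by (intro add_mono mult_left_mono nn_integral_lam_le) auto
  finally show ?thesis .
qed

lemma classA_mult_cutoff:
  assumes f: "f \<in> classA \<mu> q" and [measurable]: "\<psi> \<in> borel_measurable borel"
    and \<psi>_bound: "\<And>x. \<bar>\<psi> x\<bar> \<le> 1" and \<psi>_lip: "\<And>x y. (\<psi> x - \<psi> y)\<^sup>2 \<le> min 1 ((dist x y)\<^sup>2)"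
  shows "(\<lambda>x. f x * \<psi> x) \<in> classA \<mu> q"
proof -
  have [measurable]: "f \<in> borel_measurable borel"
    using f by (rule classA_measurable)
  obtain B where B: "\<And>x. \<bar>f x\<bar> \<le> B"
    using classA_bounded[OF f] by blast
  obtain C where C: "\<And>x. Gam \<mu> q f x \<le> ennreal C"
    using f by (auto simp: classA_def)
  obtain L where L: "lam \<mu> q = ennreal L"
    using lam_finite by (cases "lam \<mu> q") auto
  have "Gam \<mu> q (\<lambda>x. f x * \<psi> x) x \<le> ennreal (2 * max C 0 + 2 * B\<^sup>2 * max L 0)" for x
  proof -
    have "Gam \<mu> q (\<lambda>x. f x * \<psi> x) x \<le> 2 * Gam \<mu> q f x + 2 * ennreal (B\<^sup>2) * lam \<mu> q"
      using B \<psi>_bound \<psi>_lip by (intro Gam_mult_cutoff_le) auto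
    also have "\<dots> \<le> 2 * ennreal (max C 0) + 2 * ennreal (B\<^sup>2) * ennreal (max L 0)"
      using C[of x] L by (intro add_mono mult_left_mono) (auto intro: order_trans ennreal_leI)
    finally show ?thesis
      by (simp add: ennreal_plus ennreal_mult)
  qed
  then have "\<exists>C. \<forall>x. Gam \<mu> q (\<lambda>x. f x * \<psi> x) x \<le> ennreal C"
    by blast
  moreover have "\<bar>f x * \<psi> x\<bar> \<le> B" for x
  proof -
    have "\<bar>f x\<bar> * \<bar>\<psi> x\<bar> \<le> B * 1"
      using B[of x] \<psi>_bound[of x] by (intro mult_mono) auto
    then show ?thesis
      by (simp add: abs_mult)
  qed
  then have "bounded (range (\<lambda>x. f x * \<psi> x))"
    unfolding bounded_iff by auto
  ultimately show ?thesis
    unfolding classA_def by (simp add: measurable_\<mu>_eq)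
qed

definition shell_weight :: "nat \<Rightarrow> ennreal" where
  "shell_weight m = binv \<beta> (tail_arg \<mu> x0 m) * ennreal (exp (Zconst x0 V (m + 1)))"

lemma shell_classA: "f \<in> classA \<mu> q \<Longrightarrow> (\<lambda>x. f x * shell x0 m x) \<in> classA \<mu> q"
  by (rule classA_mult_cutoff[OF _ shell_measurable abs_shell_le_1 shell_diff_sq_le])

lemma shell_poincare:
  assumes f: "f \<in> classA \<mu> q" and b_fin: "binv \<beta> (tail_arg \<mu> x0 m) < \<infinity>"
  shows "(\<integral>\<^sup>+ x. ennreal ((f x * shell x0 m x)\<^sup>2) \<partial>\<mu>)
    \<le> 2 * binv \<beta> (tail_arg \<mu> x0 m) * formE \<mu> q (\<lambda>x. f x * shell x0 m x)"
proof -
  let ?h = "\<lambda>x. f x * shell x0 m x"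
  have "(\<integral>\<^sup>+ x. ennreal ((?h x)\<^sup>2) \<partial>\<mu>) \<le> binv \<beta> (tail_arg \<mu> x0 m) * (2 * formE \<mu> q ?h)"
    unfolding binv_def
  proof (rule le_Inf_ennreal_mult)
    show "Inf (ennreal ` {r. 0 < r \<and> ennreal (\<beta> r) \<le> tail_arg \<mu> x0 m}) < \<infinity>"
      using b_fin by (simp add: binv_def)
    show "2 * formE \<mu> q ?h < \<infinity>"
      using formE_finite_classA[OF prob shell_classA[OF f]] by (simp add: ennreal_mult_less_top)
  next
    fix r assume r: "r \<in> {r. 0 < r \<and> ennreal (\<beta> r) \<le> tail_arg \<mu> x0 m}"
    have A: "{x. real m - 1 < rho x0 x} \<in> sets \<mu>"
      by measurable
    have supp: "?h x \<noteq> 0 \<Longrightarrow> x \<in> {x. real m - 1 < rho x0 x}" for x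
      using shell_nonzero[of x0 m x] by auto
    have small: "ennreal (\<beta> r) \<le> inverse (2 * ennreal (measure \<mu> {x. real m - 1 < rho x0 x}))"
      using r by (simp add: tail_arg_def)
    have "(\<integral>\<^sup>+ x. ennreal ((?h x)\<^sup>2) \<partial>\<mu>) \<le> 2 * (ennreal r * formE \<mu> q ?h)"
      using r by (intro super_poincare_small_support[OF prob SP shell_classA[OF f] A supp _ small]) simp_all
    then show "(\<integral>\<^sup>+ x. ennreal ((?h x)\<^sup>2) \<partial>\<mu>) \<le> ennreal r * (2 * formE \<mu> q ?h)"
      by (simp add: mult_ac)
  qed
  then show ?thesis
    by (simp add: mult_ac)
qed

lemma V_le_Zconst: "rho x0 x \<le> real m + 2 \<Longrightarrow> V x \<le> Zconst x0 V (m + 1)"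
  unfolding Zconst_def using bounded_imp_bdd_above[OF V_bounded]
  by (intro cSup_upper) auto

lemma weighted_shell_poincare:
  assumes f: "f \<in> classA \<mu> q" and b_fin: "binv \<beta> (tail_arg \<mu> x0 m) < \<infinity>"
  shows "(\<integral>\<^sup>+ x. ennreal (exp (V x)) * ennreal ((f x * shell x0 m x)\<^sup>2) \<partial>\<mu>)
    \<le> 2 * shell_weight m * formE \<mu> q (\<lambda>x. f x * shell x0 m x)"
proof -
  have [measurable]: "f \<in> borel_measurable borel"
    using f by (rule classA_measurable)
  have "(\<integral>\<^sup>+ x. ennreal (exp (V x)) * ennreal ((f x * shell x0 m x)\<^sup>2) \<partial>\<mu>)
      \<le> (\<integral>\<^sup>+ x. ennreal (exp (Zconst x0 V (m + 1))) * ennreal ((f x * shell x0 m x)\<^sup>2) \<partial>\<mu>)"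
  proof (intro nn_integral_mono)
    fix x
    show "ennreal (exp (V x)) * ennreal ((f x * shell x0 m x)\<^sup>2)
        \<le> ennreal (exp (Zconst x0 V (m + 1))) * ennreal ((f x * shell x0 m x)\<^sup>2)"
    proof (cases "shell x0 m x = 0")
      case False
      then have "V x \<le> Zconst x0 V (m + 1)"
        using shell_nonzero[of x0 m x] by (intro V_le_Zconst) simp
      then show ?thesis
        by (intro mult_right_mono ennreal_leI) auto
    qed simp
  qed
  also have "\<dots> = ennreal (exp (Zconst x0 V (m + 1))) * (\<integral>\<^sup>+ x. ennreal ((f x * shell x0 m x)\<^sup>2) \<partial>\<mu>)"
    by (rule nn_integral_cmult) measurable
  also have "\<dots> \<le> ennreal (exp (Zconst x0 V (m + 1)))
      * (2 * binv \<beta> (tail_arg \<mu> x0 m) * formE \<mu> q (\<lambda>x. f x * shell x0 m x))"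
    by (intro mult_left_mono shell_poincare f b_fin) simp
  also have "\<dots> = 2 * shell_weight m * formE \<mu> q (\<lambda>x. f x * shell x0 m x)"
    by (simp add: shell_weight_def mult_ac)
  finally show ?thesis .
qed

lemma shell_weight_le_zeta: "n \<le> m \<Longrightarrow> shell_weight m \<le> zeta_const \<mu> x0 \<beta> V n"
  unfolding shell_weight_def zeta_const_def by (rule SUP_upper) simp

lemma binv_tail_le_eps:
  "n \<le> m \<Longrightarrow> binv \<beta> (tail_arg \<mu> x0 m) * ennreal (exp (Kconst x0 V m k)) \<le> eps_const \<mu> x0 \<beta> V n k"
  unfolding eps_const_def by (rule SUP_upper) simp

text \<open>On the ball containing \<open>x\<close>, \<open>Z(m + 1) = K(m, k) + inf V \<le> K(m, k) + V(x)\<close>.\<close>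
lemma shell_weight_le_eps:
  assumes "n \<le> m" and x: "rho x0 x \<le> real m + real k + 2"
  shows "shell_weight m \<le> eps_const \<mu> x0 \<beta> V n k * ennreal (exp (V x))"
proof -
  let ?I = "Inf (V ` {x. rho x0 x \<le> real m + real k + 2})"
  have "Zconst x0 V (m + 1) = Kconst x0 V m k + ?I"
    unfolding Zconst_def Kconst_def by (simp add: add.commute add.left_commute)
  moreover have "?I \<le> V x"
    using x bounded_imp_bdd_below[OF V_bounded] by (intro cInf_lower) auto
  ultimately have "ennreal (exp (Zconst x0 V (m + 1))) \<le> ennreal (exp (Kconst x0 V m k)) * ennreal (exp (V x))"
    by (simp add: exp_add ennreal_mult[symmetric] del: ennreal_mult')
  then have "shell_weight m \<le> binv \<beta> (tail_arg \<mu> x0 m) * ennreal (exp (Kconst x0 V m k)) * ennreal (exp (V x))"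
    unfolding shell_weight_def by (simp add: mult.assoc mult_left_mono)
  also have "\<dots> \<le> eps_const \<mu> x0 \<beta> V n k * ennreal (exp (V x))"
    using binv_tail_le_eps[OF assms(1)] by (rule mult_right_mono) simp
  finally show ?thesis .
qed

lemma binv_tail_finite:
  assumes "eps_const \<mu> x0 \<beta> V n k < \<infinity>" "n \<le> m"
  shows "binv \<beta> (tail_arg \<mu> x0 m) < \<infinity>"
proof -
  have "binv \<beta> (tail_arg \<mu> x0 m) * ennreal (exp (Kconst x0 V m k)) < \<infinity>"
    using binv_tail_le_eps[OF assms(2), of k] assms(1) by (rule le_less_trans)
  then show ?thesis
    using ennreal_mult_less_top by force
qed

lemma tail_le_sum_shells:
  assumes [measurable]: "f \<in> borel_measurable borel"
  shows "(\<integral>\<^sup>+ x. ennreal ((f x)\<^sup>2 * indicator {x. rho x0 x \<ge> real n} x) \<partial>muV \<mu> V)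
    \<le> (\<Sum>m. if n \<le> m then \<integral>\<^sup>+ x. ennreal (exp (V x)) * ennreal ((f x * shell x0 m x)\<^sup>2) \<partial>\<mu> else 0)"
proof -
  let ?g = "\<lambda>m x. if n \<le> m then ennreal (exp (V x)) * ennreal ((f x * shell x0 m x)\<^sup>2) else 0"
  have "(\<integral>\<^sup>+ x. ennreal ((f x)\<^sup>2 * indicator {x. rho x0 x \<ge> real n} x) \<partial>muV \<mu> V)
      = (\<integral>\<^sup>+ x. ennreal (exp (V x)) * ennreal ((f x)\<^sup>2 * indicator {x. rho x0 x \<ge> real n} x) \<partial>\<mu>)"
    unfolding muV_def by (rule nn_integral_density) measurable
  also have "\<dots> \<le> (\<integral>\<^sup>+ x. (\<Sum>m. ?g m x) \<partial>\<mu>)"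
  proof (intro nn_integral_mono)
    fix x
    let ?m = "nat \<lfloor>rho x0 x\<rfloor>"
    show "ennreal (exp (V x)) * ennreal ((f x)\<^sup>2 * indicator {x. rho x0 x \<ge> real n} x) \<le> (\<Sum>m. ?g m x)"
    proof (cases "rho x0 x \<ge> real n")
      case True
      then have "n \<le> ?m"
        by linarith
      then have "ennreal (exp (V x)) * ennreal ((f x)\<^sup>2 * indicator {x. rho x0 x \<ge> real n} x) = ?g ?m x"
        using True by (simp add: shell_floor_eq_1)
      also have "\<dots> \<le> (\<Sum>m. ?g m x)"
        using sum_le_suminf[of "\<lambda>m. ?g m x" "{?m}"] by simp
      finally show ?thesis .
    qed simp
  qed
  also have "\<dots> = (\<Sum>m. \<integral>\<^sup>+ x. ?g m x \<partial>\<mu>)"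
    by (rule nn_integral_suminf) measurable
  also have "\<dots> = (\<Sum>m. if n \<le> m then \<integral>\<^sup>+ x. ennreal (exp (V x)) * ennreal ((f x * shell x0 m x)\<^sup>2) \<partial>\<mu> else 0)"
    by (intro suminf_cong) simp
  finally show ?thesis .
qed

lemma tail_le_sum_shell_energies:
  assumes f: "f \<in> classA \<mu> q" and eps_fin: "eps_const \<mu> x0 \<beta> V n k < \<infinity>"
  shows "(\<integral>\<^sup>+ x. ennreal ((f x)\<^sup>2 * indicator {x. rho x0 x \<ge> real n} x) \<partial>muV \<mu> V)
    \<le> (\<Sum>m. if n \<le> m then 2 * shell_weight m * formE \<mu> q (\<lambda>x. f x * shell x0 m x) else 0)"
  using tail_le_sum_shells[OF classA_measurable[OF f]]
proof (rule order_trans)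
  show "(\<Sum>m. if n \<le> m then \<integral>\<^sup>+ x. ennreal (exp (V x)) * ennreal ((f x * shell x0 m x)\<^sup>2) \<partial>\<mu> else 0)
      \<le> (\<Sum>m. if n \<le> m then 2 * shell_weight m * formE \<mu> q (\<lambda>x. f x * shell x0 m x) else 0)"
    using weighted_shell_poincare[OF f binv_tail_finite[OF eps_fin]] by (intro suminf_le) auto
qed

lemma sum_shell_energies_eq:
  fixes w :: "nat \<Rightarrow> ennreal"
  assumes [measurable]: "f \<in> borel_measurable borel"
  shows "(\<Sum>m. if n \<le> m then 2 * w m * formE \<mu> q (\<lambda>x. f x * shell x0 m x) else 0)
    = (\<integral>\<^sup>+ x. \<integral>\<^sup>+ y. (\<Sum>m. if n \<le> m
          then 2 * w m * ennreal ((f x * shell x0 m x - f y * shell x0 m y)\<^sup>2 * q x y) else 0) \<partial>\<mu> \<partial>\<mu>)"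
proof -
  let ?P = "\<lambda>m x y. if n \<le> m then 2 * w m * ennreal ((f x * shell x0 m x - f y * shell x0 m y)\<^sup>2 * q x y) else 0"
  have "(if n \<le> m then 2 * w m * formE \<mu> q (\<lambda>x. f x * shell x0 m x) else 0) = (\<integral>\<^sup>+ x. \<integral>\<^sup>+ y. ?P m x y \<partial>\<mu> \<partial>\<mu>)" for m
    unfolding formE_def Gam_def by (simp add: nn_integral_cmult)
  then have "(\<Sum>m. if n \<le> m then 2 * w m * formE \<mu> q (\<lambda>x. f x * shell x0 m x) else 0)
      = (\<Sum>m. \<integral>\<^sup>+ x. \<integral>\<^sup>+ y. ?P m x y \<partial>\<mu> \<partial>\<mu>)"
    by simp
  also have "\<dots> = (\<integral>\<^sup>+ x. (\<Sum>m. \<integral>\<^sup>+ y. ?P m x y \<partial>\<mu>) \<partial>\<mu>)"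
    by (rule nn_integral_suminf[symmetric]) measurable
  also have "\<dots> = (\<integral>\<^sup>+ x. \<integral>\<^sup>+ y. (\<Sum>m. ?P m x y) \<partial>\<mu> \<partial>\<mu>)"
    by (intro nn_integral_cong nn_integral_suminf[symmetric]) measurable
  finally show ?thesis .
qed

lemma nn_integral_energy_density_le:
  fixes c z :: ennreal and B :: real
  assumes [measurable]: "f \<in> borel_measurable borel"
  shows "(\<integral>\<^sup>+ y. 12 * c * ennreal ((f x - f y)\<^sup>2 * q x y)
        + 24 * c * ennreal ((f x)\<^sup>2 * min 1 ((dist x y)\<^sup>2) * q x y)
        + 12 * z * ennreal (B\<^sup>2 * q x y) * indicator {v. dist x v > real k \<and> rho x0 v \<ge> real n - 1} y \<partial>\<mu>)
    \<le> 12 * c * Gam \<mu> q f x + 24 * c * ennreal ((f x)\<^sup>2) * lam \<mu> q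
      + 12 * z * ennreal (B\<^sup>2) * (\<integral>\<^sup>+ y. indicator {y. dist x y > real k \<and> rho x0 y \<ge> real n - 1} y * ennreal (q x y) \<partial>\<mu>)"
    (is "?L \<le> _")
proof -
  have "?L = (\<integral>\<^sup>+ y. 12 * c * ennreal ((f x - f y)\<^sup>2 * q x y)
        + 24 * c * ennreal ((f x)\<^sup>2) * ennreal (min 1 ((dist x y)\<^sup>2) * q x y)
        + 12 * z * ennreal (B\<^sup>2) * (indicator {y. dist x y > real k \<and> rho x0 y \<ge> real n - 1} y * ennreal (q x y)) \<partial>\<mu>)"
    using q_nonneg by (intro nn_integral_cong) (simp add: ennreal_mult mult_ac)
  also have "\<dots> = 12 * c * Gam \<mu> q f x
      + 24 * c * ennreal ((f x)\<^sup>2) * (\<integral>\<^sup>+ y. ennreal (min 1 ((dist x y)\<^sup>2) * q x y) \<partial>\<mu>)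
      + 12 * z * ennreal (B\<^sup>2) * (\<integral>\<^sup>+ y. indicator {y. dist x y > real k \<and> rho x0 y \<ge> real n - 1} y * ennreal (q x y) \<partial>\<mu>)"
    unfolding Gam_def by (simp add: nn_integral_add nn_integral_cmult)
  also have "\<dots> \<le> 12 * c * Gam \<mu> q f x + 24 * c * ennreal ((f x)\<^sup>2) * lam \<mu> q
      + 12 * z * ennreal (B\<^sup>2) * (\<integral>\<^sup>+ y. indicator {y. dist x y > real k \<and> rho x0 y \<ge> real n - 1} y * ennreal (q x y) \<partial>\<mu>)"
    by (intro add_mono mult_left_mono nn_integral_lam_le order_refl) simp
  finally show ?thesis .
qed

lemma nn_integral_energy_bound_le:
  fixes \<epsilon> \<zeta> :: ennreal and B :: real
  assumes [measurable]: "f \<in> borel_measurable borel"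
  shows "(\<integral>\<^sup>+ x. \<integral>\<^sup>+ y. 12 * (\<epsilon> * ennreal (exp (V x))) * ennreal ((f x - f y)\<^sup>2 * q x y)
        + 24 * (\<epsilon> * ennreal (exp (V x))) * ennreal ((f x)\<^sup>2 * min 1 ((dist x y)\<^sup>2) * q x y)
        + 12 * \<zeta> * ennreal (B\<^sup>2 * q x y) * indicator {v. dist x v > real k \<and> rho x0 v \<ge> real n - 1} y \<partial>\<mu> \<partial>\<mu>)
    \<le> 12 * \<epsilon> * (\<integral>\<^sup>+ x. Gam \<mu> q f x \<partial>muV \<mu> V)
      + 24 * lam \<mu> q * \<epsilon> * (\<integral>\<^sup>+ x. ennreal ((f x)\<^sup>2) \<partial>muV \<mu> V)
      + 12 * \<zeta> * gamma_const \<mu> x0 q n k * ennreal (B\<^sup>2)"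
    (is "?L \<le> _")
proof -
  define G where "G x = (\<integral>\<^sup>+ y. indicator {y. dist x y > real k \<and> rho x0 y \<ge> real n - 1} y * ennreal (q x y) \<partial>\<mu>)" for x
  have [measurable]: "(\<lambda>x. Gam \<mu> q f x) \<in> borel_measurable borel"
    by (rule Gam_measurable) measurable
  have [measurable]: "G \<in> borel_measurable borel"
    unfolding G_def by measurable
  have "?L \<le> (\<integral>\<^sup>+ x. 12 * (\<epsilon> * ennreal (exp (V x))) * Gam \<mu> q f x
      + 24 * (\<epsilon> * ennreal (exp (V x))) * ennreal ((f x)\<^sup>2) * lam \<mu> q + 12 * \<zeta> * ennreal (B\<^sup>2) * G x \<partial>\<mu>)"
    unfolding G_def by (intro nn_integral_mono nn_integral_energy_density_le) measurable
  also have "\<dots> = (\<integral>\<^sup>+ x. 12 * \<epsilon> * (ennreal (exp (V x)) * Gam \<mu> q f x)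
      + 24 * lam \<mu> q * \<epsilon> * (ennreal (exp (V x)) * ennreal ((f x)\<^sup>2)) + 12 * \<zeta> * ennreal (B\<^sup>2) * G x \<partial>\<mu>)"
    by (simp add: mult_ac)
  also have "\<dots> = 12 * \<epsilon> * (\<integral>\<^sup>+ x. Gam \<mu> q f x \<partial>muV \<mu> V)
      + 24 * lam \<mu> q * \<epsilon> * (\<integral>\<^sup>+ x. ennreal ((f x)\<^sup>2) \<partial>muV \<mu> V)
      + 12 * \<zeta> * gamma_const \<mu> x0 q n k * ennreal (B\<^sup>2)"
    unfolding muV_def gamma_const_def G_def[symmetric]
    by (simp add: nn_integral_add nn_integral_cmult nn_integral_density) (simp add: mult_ac)
  finally show ?thesis .
qed

theorem tail_estimate:
  assumes f: "f \<in> classA \<mu> q" and k: "1 \<le> k" and eps_fin: "eps_const \<mu> x0 \<beta> V n k < \<infinity>"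
  shows "(\<integral>\<^sup>+ x. ennreal ((f x)\<^sup>2 * indicator {x. rho x0 x \<ge> real n} x) \<partial>muV \<mu> V)
    \<le> 12 * eps_const \<mu> x0 \<beta> V n k * (\<integral>\<^sup>+ x. Gam \<mu> q f x \<partial>muV \<mu> V)
      + 24 * lam \<mu> q * eps_const \<mu> x0 \<beta> V n k * (\<integral>\<^sup>+ x. ennreal ((f x)\<^sup>2) \<partial>muV \<mu> V)
      + 12 * zeta_const \<mu> x0 \<beta> V n * gamma_const \<mu> x0 q n k * ennreal ((sup_norm f)\<^sup>2)"
proof -
  have [measurable]: "f \<in> borel_measurable borel"
    using f by (rule classA_measurable)
  let ?\<epsilon> = "eps_const \<mu> x0 \<beta> V n k" and ?\<zeta> = "zeta_const \<mu> x0 \<beta> V n"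
  let ?R = "\<lambda>x y. 12 * (?\<epsilon> * ennreal (exp (V x))) * ennreal ((f x - f y)\<^sup>2 * q x y)
    + 24 * (?\<epsilon> * ennreal (exp (V x))) * ennreal ((f x)\<^sup>2 * min 1 ((dist x y)\<^sup>2) * q x y)
    + 12 * ?\<zeta> * ennreal ((sup_norm f)\<^sup>2 * q x y) * indicator {v. dist x v > real k \<and> rho x0 v \<ge> real n - 1} y"
  have "\<bar>f y\<bar> \<le> sup_norm f" for y
    using f by (intro abs_le_sup_norm) (simp add: classA_def)
  then have pointwise: "(\<Sum>m. if n \<le> m then 2 * shell_weight m
      * ennreal ((f x * shell x0 m x - f y * shell x0 m y)\<^sup>2 * q x y) else 0) \<le> ?R x y" for x y
    using shell_weight_le_eps shell_weight_le_zeta by (intro shell_energy_sum_le k q_nonneg)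
  have "(\<integral>\<^sup>+ x. ennreal ((f x)\<^sup>2 * indicator {x. rho x0 x \<ge> real n} x) \<partial>muV \<mu> V)
      \<le> (\<Sum>m. if n \<le> m then 2 * shell_weight m * formE \<mu> q (\<lambda>x. f x * shell x0 m x) else 0)"
    by (rule tail_le_sum_shell_energies[OF f eps_fin])
  also have "\<dots> = (\<integral>\<^sup>+ x. \<integral>\<^sup>+ y. (\<Sum>m. if n \<le> m then 2 * shell_weight m
        * ennreal ((f x * shell x0 m x - f y * shell x0 m y)\<^sup>2 * q x y) else 0) \<partial>\<mu> \<partial>\<mu>)"
    by (rule sum_shell_energies_eq) measurable
  also have "\<dots> \<le> (\<integral>\<^sup>+ x. \<integral>\<^sup>+ y. ?R x y \<partial>\<mu> \<partial>\<mu>)"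
    by (intro nn_integral_mono pointwise)
  also have "\<dots> \<le> 12 * ?\<epsilon> * (\<integral>\<^sup>+ x. Gam \<mu> q f x \<partial>muV \<mu> V)
      + 24 * lam \<mu> q * ?\<epsilon> * (\<integral>\<^sup>+ x. ennreal ((f x)\<^sup>2) \<partial>muV \<mu> V)
      + 12 * ?\<zeta> * gamma_const \<mu> x0 q n k * ennreal ((sup_norm f)\<^sup>2)"
    by (rule nn_integral_energy_bound_le) measurable
  finally show ?thesis .
qed

end

theorem lemma2p6:
  fixes \<mu> :: "'a::polish_space measure"
    and q :: "'a \<Rightarrow> 'a \<Rightarrow> real"
    and x0 :: 'a
    and V :: "'a \<Rightarrow> real"
    and \<beta> :: "real \<Rightarrow> real"
    and n k :: nat
    and f :: "'a \<Rightarrow> real"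
  assumes prob: "prob_space \<mu>"
    and space: "space \<mu> = UNIV"
    and borel: "sets \<mu> = sets borel"
    and q_meas: "(\<lambda>(x, y). q x y) \<in> borel_measurable (\<mu> \<Otimes>\<^sub>M \<mu>)"
    and q_nonneg: "\<And>x y. q x y \<ge> 0"
    and q_diag: "\<And>x. q x x = 0"
    and lam_fin: "lam \<mu> q < \<infinity>"
    and A_dense: "\<And>h e. h \<in> borel_measurable \<mu> \<Longrightarrow>
                    (\<integral>\<^sup>+ x. ennreal ((h x)\<^sup>2) \<partial>\<mu>) < \<infinity> \<Longrightarrow> e > 0 \<Longrightarrow>
                    \<exists>g\<in>classA \<mu> q. (\<integral>\<^sup>+ x. ennreal ((h x - g x)\<^sup>2) \<partial>\<mu>) < e"
    and V_meas: "V \<in> borel_measurable \<mu>"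
    and V_bdd: "\<And>r. bounded (V ` {x. rho x0 x \<le> r})"
    and V_norm: "(\<integral>\<^sup>+ x. ennreal (exp (V x)) \<partial>\<mu>) = 1"
    and beta_pos: "\<And>r. r > 0 \<Longrightarrow> \<beta> r > 0"
    and beta_decr: "\<And>r s. 0 < r \<Longrightarrow> r \<le> s \<Longrightarrow> \<beta> s \<le> \<beta> r"
    and SP: "super_poincare \<mu> q \<beta>"
    and n: "n \<ge> 1" and k: "k \<ge> 1"
    and f: "f \<in> classA \<mu> q"
    and eps_fin: "eps_const \<mu> x0 \<beta> V n k < \<infinity>"
    and zeta_fin: "zeta_const \<mu> x0 \<beta> V n < \<infinity>"
  shows "(\<integral>\<^sup>+ x. ennreal ((f x)\<^sup>2 * indicator {x. rho x0 x \<ge> real n} x) \<partial>muV \<mu> V)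
     \<le> 12 * eps_const \<mu> x0 \<beta> V n k * (\<integral>\<^sup>+ x. Gam \<mu> q f x \<partial>muV \<mu> V)
       + 128 * lam \<mu> q * eps_const \<mu> x0 \<beta> V n k * (\<integral>\<^sup>+ x. ennreal ((f x)\<^sup>2) \<partial>muV \<mu> V)
       + 96 * zeta_const \<mu> x0 \<beta> V n * gamma_const \<mu> x0 q n k * ennreal ((sup_norm f)\<^sup>2)"
proof -
  interpret tail_setting \<mu> q x0 V \<beta>
    by (rule tail_setting.intro[OF prob borel q_meas q_nonneg lam_fin V_meas V_bdd SP])
  show ?thesis
    using tail_estimate[OF f k eps_fin]
    by (rule order_trans) (intro add_mono mult_right_mono order_refl; simp)
qed

end
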